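(* For every prime $p$, $\mathscr{U}(p)\supset\mathscr{A}(p)$.
   Context: Let $p$ be a prime. For an integer $r\ge 2$ let $x_1,\ldots,x_r$ be independent indeterminates over $\mathbb{F}_p$ and $f(x)=(x-x_1)\cdots(x-x_r)$. For integers $e\ge0$, $0\le d\le p$ write $f(x)^e=\sum_{i\ge0}c_ix^i$ ($c_i=0$ for $i<0$) and let $M_d(f(x)^e)$ be the $d\times d$ matrix with $(i,j)$ entry $c_{ip+j-d-1}$. Put $\delta(x_1,\ldots,x_r)=\prod_{1\le i<j\le r}(x_i-x_j)$. $\mathscr{A}(p)$ is the set of integer triples $(r,e,d)$ with $r\ge2$, $e\ge1$, $1\le d\le p$, such that $\det M_d(f(x)^e)=\varepsilon\,\delta(x_1,\ldots,x_r)^g$ for some $\varepsilon\in\mathbb{F}_p^{\times}$ and positive integer $g$. For integer triples put $g=g(r,e,d)=\left\{red-\frac{d(d+1)}{2}(p-1)\right\}\big/\frac{r(r-1)}{2}\in\mathbb{Q}$. $\mathscr{U}(p)$ is the set of integer triples $(r,e,d)$ with $r\ge2$, $e\ge1$, $1\le d\le p$, $d(p-1)\le re\le r(p-1)$, $g>0$, and $g\in2\mathbb{Z}$ if $p\ne2$, $g\in\mathbb{Z}$ if $p=2$. *)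

theory Defs
  imports "HOL-Library.Poly_Mapping" "HOL-Computational_Algebra.Polynomial"
    "Berlekamp_Zassenhaus.Finite_Field" "Jordan_Normal_Form.Determinant"
begin

type_synonym 'a mpoly = "(nat \<Rightarrow>\<^sub>0 nat) \<Rightarrow>\<^sub>0 'a"

definition mVar :: "nat \<Rightarrow> 'a::comm_ring_1 mpoly" where
  "mVar i = Poly_Mapping.single (Poly_Mapping.single i 1) 1"

definition mConst :: "'a::comm_ring_1 \<Rightarrow> 'a mpoly" where
  "mConst c = Poly_Mapping.single 0 c"

text \<open>f(x) = (x - x_1)...(x - x_r), with the indeterminates indexed 0..r-1.\<close>
definition fpoly :: "nat \<Rightarrow> 'a::comm_ring_1 mpoly poly" where
  "fpoly r = (\<Prod>i<r. [:- mVar i, 1:])"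

definition coeffZ :: "'b::zero poly \<Rightarrow> int \<Rightarrow> 'b" where
  "coeffZ q k = (if k < 0 then 0 else coeff q (nat k))"

text \<open>M_d(q): the d x d matrix whose (i,j) entry (1-indexed) is c_{ip+j-d-1};
  with 0-indexed i, j this is c_{(i+1)p+j-d}.\<close>
definition Mmat :: "nat \<Rightarrow> nat \<Rightarrow> 'b::zero poly \<Rightarrow> 'b mat" where
  "Mmat p d q = mat d d (\<lambda>(i,j). coeffZ q ((int i + 1) * int p + int j - int d))"

definition delta :: "nat \<Rightarrow> 'a::comm_ring_1 mpoly" where
  "delta r = (\<Prod>i<r. \<Prod>j\<in>{i<..<r}. (mVar i - mVar j))"

text \<open>Membership in A(p), where p = CARD('p) and F_p = 'p mod_ring.\<close>
definition inA :: "'p::prime_card itself \<Rightarrow> nat \<Rightarrow> nat \<Rightarrow> nat \<Rightarrow> bool" where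
  "inA _ r e d \<longleftrightarrow> r \<ge> 2 \<and> e \<ge> 1 \<and> 1 \<le> d \<and> d \<le> CARD('p) \<and>
     (\<exists>\<epsilon>::'p mod_ring. \<epsilon> \<noteq> 0 \<and> (\<exists>g::nat. g > 0 \<and>
        det (Mmat CARD('p) d ((fpoly r :: 'p mod_ring mpoly poly) ^ e))
          = mConst \<epsilon> * delta r ^ g))"

definition gval :: "nat \<Rightarrow> nat \<Rightarrow> nat \<Rightarrow> nat \<Rightarrow> rat" where
  "gval p r e d = (of_nat r * of_nat e * of_nat d
      - of_nat d * (of_nat d + 1) / 2 * (of_nat p - 1)) / (of_nat r * (of_nat r - 1) / 2)"

definition inU :: "nat \<Rightarrow> nat \<Rightarrow> nat \<Rightarrow> nat \<Rightarrow> bool" where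
  "inU p r e d \<longleftrightarrow> r \<ge> 2 \<and> e \<ge> 1 \<and> 1 \<le> d \<and> d \<le> p \<and>
     int d * (int p - 1) \<le> int r * int e \<and> int r * int e \<le> int r * (int p - 1) \<and>
     gval p r e d > 0 \<and>
     (if p \<noteq> 2 then (\<exists>k::int. gval p r e d = of_int (2 * k))
      else gval p r e d \<in> \<int>)"

end

theory Submission
  imports Defs
begin

text \<open>All claims come from specialising the identity det M_d(f^e) = \<epsilon> \<delta>^g along ring
  homomorphisms x_i \<mapsto> a_i; for distinct a_i in a domain the right-hand side stays nonzero.
  Since f^e has degree re, the last row of M_d vanishes unless d(p-1) \<le> re.  With a_0 = 0,
  x^e divides f^e and the first row vanishes unless e < p.  Swapping a_0 and a_1 fixes f but
  negates \<delta>, so g is even as soon as 2 \<noteq> 0.  Finally, with a_i = X b_i in F_p[t][X] both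
  sides are homogeneous in X, and comparing degrees gives
  d r e - (p-1) d (d+1)/2 = g r (r-1)/2.\<close>

definition eval_monomial :: "(nat \<Rightarrow> 'b::comm_semiring_1) \<Rightarrow> (nat \<Rightarrow>\<^sub>0 nat) \<Rightarrow> 'b" where
  "eval_monomial a \<mu> = (\<Prod>i\<in>Poly_Mapping.keys \<mu>. a i ^ Poly_Mapping.lookup \<mu> i)"

lemma eval_monomial_superset:
  assumes "finite K" "Poly_Mapping.keys \<mu> \<subseteq> K"
  shows "eval_monomial a \<mu> = (\<Prod>i\<in>K. a i ^ Poly_Mapping.lookup \<mu> i)"
  unfolding eval_monomial_def
  by (rule prod.mono_neutral_left[OF assms]) (auto simp: in_keys_iff)

lemma eval_monomial_add: "eval_monomial a (\<mu> + \<nu>) = eval_monomial a \<mu> * eval_monomial a \<nu>"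
proof -
  let ?K = "Poly_Mapping.keys \<mu> \<union> Poly_Mapping.keys \<nu>"
  have "Poly_Mapping.keys (\<mu> + \<nu>) \<subseteq> ?K"
    by (auto simp: in_keys_iff lookup_add)
  then show ?thesis
    by (simp add: eval_monomial_superset[of ?K] lookup_add power_add prod.distrib)
qed

lemma eval_monomial_0 [simp]: "eval_monomial a 0 = 1"
  by (simp add: eval_monomial_def)

lemma eval_monomial_single [simp]: "eval_monomial a (Poly_Mapping.single i 1) = a i"
  by (simp add: eval_monomial_def)

lemma poly_mapping_sum_single:
  "m = (\<Sum>\<mu>\<in>Poly_Mapping.keys m. Poly_Mapping.single \<mu> (Poly_Mapping.lookup m \<mu>))"
  by (rule poly_mapping_eqI)
    (auto simp: lookup_sum lookup_single when_def in_keys_iff sum.delta' simp del: lookup_not_eq_zero_eq_in_keys)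

definition eval_mpoly :: "('a::comm_ring_1 \<Rightarrow> 'b::comm_ring_1) \<Rightarrow> (nat \<Rightarrow> 'b) \<Rightarrow> 'a mpoly \<Rightarrow> 'b" where
  "eval_mpoly hc a m = (\<Sum>\<mu>\<in>Poly_Mapping.keys m. hc (Poly_Mapping.lookup m \<mu>) * eval_monomial a \<mu>)"

context
  fixes hc :: "'a::comm_ring_1 \<Rightarrow> 'b::comm_ring_1" and a :: "nat \<Rightarrow> 'b"
  assumes hc: "comm_ring_hom hc"
begin

interpretation hc: comm_ring_hom hc by (rule hc)

lemma eval_mpoly_superset:
  assumes "finite K" "Poly_Mapping.keys m \<subseteq> K"
  shows "eval_mpoly hc a m = (\<Sum>\<mu>\<in>K. hc (Poly_Mapping.lookup m \<mu>) * eval_monomial a \<mu>)"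
  unfolding eval_mpoly_def
  by (rule sum.mono_neutral_left[OF assms]) (auto simp: in_keys_iff)

lemma eval_mpoly_add: "eval_mpoly hc a (m + n) = eval_mpoly hc a m + eval_mpoly hc a n"
proof -
  let ?K = "Poly_Mapping.keys m \<union> Poly_Mapping.keys n"
  have "Poly_Mapping.keys (m + n) \<subseteq> ?K"
    by (auto simp: in_keys_iff lookup_add)
  then show ?thesis
    by (simp add: eval_mpoly_superset[of ?K] lookup_add hc.hom_add distrib_right sum.distrib)
qed

lemma eval_mpoly_0 [simp]: "eval_mpoly hc a 0 = 0"
  by (simp add: eval_mpoly_def)

lemma eval_mpoly_sum: "eval_mpoly hc a (sum f A) = (\<Sum>x\<in>A. eval_mpoly hc a (f x))"
  by (induction A rule: infinite_finite_induct) (auto simp: eval_mpoly_add)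

lemma eval_mpoly_single: "eval_mpoly hc a (Poly_Mapping.single \<mu> c) = hc c * eval_monomial a \<mu>"
  by (cases "c = 0") (auto simp: eval_mpoly_def)

lemma eval_mpoly_mult: "eval_mpoly hc a (m * n) = eval_mpoly hc a m * eval_mpoly hc a n"
proof -
  let ?S = "\<lambda>m \<mu>. Poly_Mapping.single \<mu> (Poly_Mapping.lookup m \<mu>)"
  have "m * n = (\<Sum>\<mu>\<in>Poly_Mapping.keys m. \<Sum>\<nu>\<in>Poly_Mapping.keys n. ?S m \<mu> * ?S n \<nu>)"
    by (subst poly_mapping_sum_single[of m], subst poly_mapping_sum_single[of n])
      (simp add: sum_product)
  then show ?thesis
    by (simp add: eval_mpoly_sum eval_mpoly_single mult_single eval_monomial_add hc.hom_mult
        eval_mpoly_def[of hc a m] eval_mpoly_def[of hc a n] sum_product ac_simps)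
qed

lemma comm_ring_hom_eval_mpoly: "comm_ring_hom (eval_mpoly hc a)"
proof
  show "eval_mpoly hc a 1 = 1"
    using eval_mpoly_single[of 0 1] by (simp flip: single_one)
qed (auto simp: eval_mpoly_add eval_mpoly_mult)

lemma eval_mpoly_mVar: "eval_mpoly hc a (mVar i) = a i"
  unfolding mVar_def eval_mpoly_single hc.hom_one eval_monomial_single by simp

lemma eval_mpoly_mConst: "eval_mpoly hc a (mConst c) = hc c"
  by (simp add: mConst_def eval_mpoly_single)

end

definition poly_of_roots :: "nat \<Rightarrow> (nat \<Rightarrow> 'a::comm_ring_1) \<Rightarrow> 'a poly" where
  "poly_of_roots r a = (\<Prod>i<r. [:- a i, 1:])"

definition vandermonde :: "nat \<Rightarrow> (nat \<Rightarrow> 'a::comm_ring_1) \<Rightarrow> 'a" where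
  "vandermonde r a = (\<Prod>i<r. \<Prod>j\<in>{i<..<r}. a i - a j)"

lemma map_poly_eval_mpoly_fpoly:
  assumes "comm_ring_hom hc"
  shows "map_poly (eval_mpoly hc a) (fpoly r) = poly_of_roots r a"
proof -
  interpret ev: comm_ring_hom "eval_mpoly hc a" using assms by (rule comm_ring_hom_eval_mpoly)
  interpret map_poly_comm_ring_hom "eval_mpoly hc a" ..
  show ?thesis
    by (simp add: fpoly_def poly_of_roots_def hom_prod eval_mpoly_mVar[OF assms] ev.hom_uminus)
qed

lemma eval_mpoly_delta:
  assumes "comm_ring_hom hc"
  shows "eval_mpoly hc a (delta r) = vandermonde r a"
proof -
  interpret ev: comm_ring_hom "eval_mpoly hc a" using assms by (rule comm_ring_hom_eval_mpoly)
  show ?thesis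
    by (simp add: delta_def vandermonde_def ev.hom_prod ev.hom_minus eval_mpoly_mVar[OF assms])
qed

lemma degree_poly_of_roots_power_le: "degree (poly_of_roots r a ^ e) \<le> r * e"
proof -
  have "degree (poly_of_roots r a) \<le> r"
    unfolding poly_of_roots_def using degree_prod_sum_le[of "{..<r}" "\<lambda>i. [:- a i, 1:]"]
    by (simp add: comp_def)
  then show ?thesis
    using degree_power_le[of "poly_of_roots r a" e] by (metis le_trans mult.commute mult_le_mono2)
qed

lemma poly_of_roots_permute: "\<pi> permutes {..<r} \<Longrightarrow> poly_of_roots r (a \<circ> \<pi>) = poly_of_roots r a"
  unfolding poly_of_roots_def by (simp add: prod.permute[of \<pi> "{..<r}" "\<lambda>i. [:- a i, 1:]"] comp_def)

lemma vandermonde_nonzero: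
  fixes a :: "nat \<Rightarrow> 'a::idom"
  assumes "inj_on a {..<r}"
  shows "vandermonde r a \<noteq> 0"
proof -
  have "a i \<noteq> a j" if "i < j" "j < r" for i j
    using inj_onD[OF assms, of i j] that by auto
  then show ?thesis
    unfolding vandermonde_def by auto
qed

lemma vandermonde_split:
  assumes "2 \<le> r"
  shows "vandermonde r a = (a 0 - a 1) * (\<Prod>j\<in>{2..<r}. (a 0 - a j) * (a 1 - a j))
    * (\<Prod>i\<in>{2..<r}. \<Prod>j\<in>{i<..<r}. a i - a j)"
proof -
  have "{..<r} = insert 0 (insert 1 {2..<r})" "{0<..<r} = insert 1 {2..<r}" "{1<..<r} = {2..<r}"
    using assms by auto
  then show ?thesis
    by (simp add: vandermonde_def prod.distrib ac_simps)
qed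

lemma vandermonde_transpose_0_1:
  assumes "2 \<le> r"
  shows "vandermonde r (a \<circ> Transposition.transpose 0 1) = - vandermonde r a"
proof -
  have "(\<Prod>i\<in>{2..<r}. \<Prod>j\<in>{i<..<r}. (a \<circ> Transposition.transpose 0 1) i - (a \<circ> Transposition.transpose 0 1) j)
      = (\<Prod>i\<in>{2..<r}. \<Prod>j\<in>{i<..<r}. a i - a j)"
    by (intro prod.cong) auto
  then show ?thesis
    using assms by (simp add: vandermonde_split prod.distrib algebra_simps)
qed

lemma coeffZ_of_nat: "coeffZ q (int n) = coeff q n"
  by (simp add: coeffZ_def)

lemma Mmat_map_poly: "h 0 = 0 \<Longrightarrow> Mmat p d (map_poly h q) = map_mat h (Mmat p d q)"
  by (rule eq_matI) (auto simp: Mmat_def coeffZ_def coeff_map_poly)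

lemma det_Mmat_map_poly:
  assumes "comm_ring_hom h"
  shows "det (Mmat p d (map_poly h q)) = h (det (Mmat p d q))"
proof -
  interpret comm_ring_hom h by (rule assms)
  show ?thesis by (simp add: Mmat_map_poly)
qed

lemma det_eq_0_if_zero_row:
  assumes A: "A \<in> carrier_mat n n" and k: "k < n" and zero: "\<And>j. j < n \<Longrightarrow> A $$ (k, j) = 0"
  shows "det A = 0"
  unfolding det_def'[OF A]
proof (rule sum.neutral, intro ballI)
  fix \<pi> assume "\<pi> \<in> {\<pi>. \<pi> permutes {0..<n}}"
  then have "\<pi> k < n" using permutes_in_image k by fastforce
  then have "(\<Prod>i=0..<n. A $$ (i, \<pi> i)) = 0"
    using k zero by (intro prod_zero bexI[of _ k]) auto
  then show "signof \<pi> * (\<Prod>i=0..<n. A $$ (i, \<pi> i)) = 0" by simp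
qed

text \<open>The last row of M_d holds the coefficients c_{dp-d}, ..., c_{dp-1}.\<close>
lemma det_Mmat_eq_0_if_degree_less:
  assumes "degree q < d * (p - 1)" and "0 < d"
  shows "det (Mmat p d q) = 0"
proof (rule det_eq_0_if_zero_row)
  fix j assume "j < d"
  have "p \<noteq> 0" using assms(1) by auto
  then have "int (d * (p - 1)) = int d * (int p - 1)"
    by (simp add: of_nat_diff)
  then have index: "(int (d - 1) + 1) * int p + int j - int d = int (d * (p - 1) + j)"
    using assms(2) by (simp add: of_nat_diff algebra_simps)
  have "Mmat p d q $$ (d - 1, j) = coeffZ q ((int (d - 1) + 1) * int p + int j - int d)"
    using \<open>j < d\<close> by (simp add: Mmat_def)
  also have "\<dots> = coeff q (d * (p - 1) + j)"
    unfolding index coeffZ_of_nat ..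
  also have "\<dots> = 0"
    using assms(1) by (simp add: coeff_eq_0)
  finally show "Mmat p d q $$ (d - 1, j) = 0" .
qed (use assms in \<open>auto simp: Mmat_def\<close>)

text \<open>The first row of M_d holds the coefficients c_{p-d}, ..., c_{p-1}.\<close>
lemma det_Mmat_eq_0_if_monom_dvd:
  assumes "monom 1 p dvd q" and "d \<le> p" and "0 < d"
  shows "det (Mmat p d q) = 0"
proof (rule det_eq_0_if_zero_row)
  fix j assume "j < d"
  then have "nat (int p + int j - int d) < p" "0 \<le> int p + int j - int d"
    using assms by auto
  then show "Mmat p d q $$ (0, j) = 0"
    using \<open>j < d\<close> assms(1) by (auto simp: Mmat_def coeffZ_def monom_1_dvd_iff')
qed (use assms in \<open>auto simp: Mmat_def\<close>)

text \<open>q = c X^n; a negative n forces q = 0.\<close>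
definition monomial_of_degree :: "int \<Rightarrow> 'a::zero poly \<Rightarrow> bool" where
  "monomial_of_degree n q \<longleftrightarrow> (\<forall>i. int i \<noteq> n \<longrightarrow> coeff q i = 0)"

lemma monomial_of_degree_0 [simp]: "monomial_of_degree n 0"
  by (simp add: monomial_of_degree_def)

lemma monomial_of_degree_const: "monomial_of_degree 0 [:c:]"
  by (auto simp: monomial_of_degree_def coeff_pCons split: nat.splits)

lemma monomial_of_degree_1: "monomial_of_degree 0 1"
  by (auto simp: monomial_of_degree_def)

lemma monomial_of_degree_monom: "monomial_of_degree (int n) (monom c n)"
  by (simp add: monomial_of_degree_def coeff_monom)

lemma monomial_of_degree_add:
  "monomial_of_degree n q \<Longrightarrow> monomial_of_degree n q' \<Longrightarrow> monomial_of_degree n (q + q')"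
  by (simp add: monomial_of_degree_def)

lemma monomial_of_degree_uminus: "monomial_of_degree n q \<Longrightarrow> monomial_of_degree n (- q)"
  by (simp add: monomial_of_degree_def)

lemma monomial_of_degree_diff:
  "monomial_of_degree n q \<Longrightarrow> monomial_of_degree n q' \<Longrightarrow> monomial_of_degree n (q - q')"
  by (simp add: monomial_of_degree_def)

lemma monomial_of_degree_sum:
  "(\<And>x. x \<in> A \<Longrightarrow> monomial_of_degree n (f x)) \<Longrightarrow> monomial_of_degree n (sum f A)"
  by (induction A rule: infinite_finite_induct) (auto intro: monomial_of_degree_add)

lemma monomial_of_degree_mult:
  fixes q q' :: "'a::comm_ring_1 poly"
  assumes "monomial_of_degree n q" "monomial_of_degree m q'"
  shows "monomial_of_degree (n + m) (q * q')"
  unfolding monomial_of_degree_def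
proof (intro allI impI)
  fix k assume k: "int k \<noteq> n + m"
  have "coeff q i * coeff q' (k - i) = 0" if "i \<le> k" for i
    using assms k that unfolding monomial_of_degree_def
    by (cases "int i = n") (auto simp: of_nat_diff)
  then show "coeff (q * q') k = 0"
    by (simp add: coeff_mult)
qed

lemma monomial_of_degree_prod:
  "(\<And>x. x \<in> A \<Longrightarrow> monomial_of_degree (n x) (f x)) \<Longrightarrow>
    monomial_of_degree (\<Sum>x\<in>A. n x) (\<Prod>x\<in>A. f x :: 'a::comm_ring_1 poly)"
  by (induction A rule: infinite_finite_induct)
    (auto simp: monomial_of_degree_1 intro: monomial_of_degree_mult)

lemma monomial_of_degree_power:
  "monomial_of_degree n (q :: 'a::comm_ring_1 poly) \<Longrightarrow> monomial_of_degree (int k * n) (q ^ k)"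
  using monomial_of_degree_prod[of "{..<k}" "\<lambda>_. n" "\<lambda>_. q"] by simp

lemma monomial_of_degree_unique:
  assumes "monomial_of_degree n q" "monomial_of_degree m q" "q \<noteq> 0"
  shows "n = m"
  using assms leading_coeff_0_iff unfolding monomial_of_degree_def by metis

text \<open>G(x) \<in> R[X][x] is homogeneous of total degree m in x and X.\<close>
definition homogeneous_of_degree :: "int \<Rightarrow> 'a::comm_ring_1 poly poly \<Rightarrow> bool" where
  "homogeneous_of_degree m G \<longleftrightarrow> (\<forall>k. monomial_of_degree (m - int k) (coeff G k))"

lemma homogeneous_of_degree_1: "homogeneous_of_degree 0 1"
  by (auto simp: homogeneous_of_degree_def coeff_1 monomial_of_degree_1)

lemma homogeneous_of_degree_mult:
  assumes "homogeneous_of_degree m G" "homogeneous_of_degree n H"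
  shows "homogeneous_of_degree (m + n) (G * H)"
  unfolding homogeneous_of_degree_def coeff_mult
proof (intro allI monomial_of_degree_sum)
  fix k i :: nat assume "i \<in> {..k}"
  then have "m - int i + (n - int (k - i)) = m + n - int k" by auto
  then show "monomial_of_degree (m + n - int k) (coeff G i * coeff H (k - i))"
    using assms monomial_of_degree_mult unfolding homogeneous_of_degree_def by metis
qed

lemma homogeneous_of_degree_prod:
  "(\<And>x. x \<in> A \<Longrightarrow> homogeneous_of_degree (n x) (f x)) \<Longrightarrow>
    homogeneous_of_degree (\<Sum>x\<in>A. n x) (\<Prod>x\<in>A. f x)"
  by (induction A rule: infinite_finite_induct)
    (auto simp: homogeneous_of_degree_1 intro: homogeneous_of_degree_mult)

lemma homogeneous_of_degree_power:
  "homogeneous_of_degree n G \<Longrightarrow> homogeneous_of_degree (int k * n) (G ^ k)"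
  using homogeneous_of_degree_prod[of "{..<k}" "\<lambda>_. n" "\<lambda>_. G"] by simp

lemma homogeneous_of_degree_linear:
  "monomial_of_degree 1 b \<Longrightarrow> homogeneous_of_degree 1 [:- b, 1:]"
  by (auto simp: homogeneous_of_degree_def coeff_pCons monomial_of_degree_1
      intro: monomial_of_degree_uminus split: nat.splits)

lemma homogeneous_of_degree_poly_of_roots:
  "(\<And>i. monomial_of_degree 1 (a i)) \<Longrightarrow> homogeneous_of_degree (int r) (poly_of_roots r a)"
  using homogeneous_of_degree_prod[of "{..<r}" "\<lambda>_. 1" "\<lambda>i. [:- a i, 1:]"]
  by (simp add: poly_of_roots_def homogeneous_of_degree_linear)

lemma monomial_of_degree_coeffZ:
  "homogeneous_of_degree m G \<Longrightarrow> monomial_of_degree (m - k) (coeffZ G k)"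
  unfolding homogeneous_of_degree_def coeffZ_def by (cases "k < 0") (simp, metis nat_0_le not_less)

text \<open>The entry (i, \<pi> i) has degree m - (i + 1) p - \<pi> i + d, and \<pi> permutes the column indices.\<close>
lemma det_Mmat_homogeneous:
  assumes "homogeneous_of_degree m G"
  shows "monomial_of_degree (\<Sum>i<d. m + int d - (int i + 1) * int p - int i) (det (Mmat p d G))"
proof -
  have carrier: "Mmat p d G \<in> carrier_mat d d" by (simp add: Mmat_def)
  show ?thesis
    unfolding det_def'[OF carrier]
  proof (intro monomial_of_degree_sum)
    fix \<pi> assume "\<pi> \<in> {\<pi>. \<pi> permutes {0..<d}}"
    then have \<pi>: "\<pi> permutes {0..<d}" by simp
    have "(\<Sum>i<d. int (\<pi> i)) = (\<Sum>i<d. int i)"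
      using sum.permute[OF \<pi>, of int] by (simp add: comp_def atLeast0LessThan)
    then have degree: "0 + (\<Sum>i=0..<d. m - ((int i + 1) * int p + int (\<pi> i) - int d))
        = (\<Sum>i<d. m + int d - (int i + 1) * int p - int i)"
      by (simp add: sum_subtractf sum.distrib atLeast0LessThan algebra_simps)
    have "monomial_of_degree (m - ((int i + 1) * int p + int (\<pi> i) - int d)) (Mmat p d G $$ (i, \<pi> i))"
      if "i \<in> {0..<d}" for i
      using that permutes_in_image[OF \<pi>, of i] monomial_of_degree_coeffZ[OF assms]
      by (simp add: Mmat_def)
    then have "monomial_of_degree (0 + (\<Sum>i=0..<d. m - ((int i + 1) * int p + int (\<pi> i) - int d)))
        (signof \<pi> * (\<Prod>i=0..<d. Mmat p d G $$ (i, \<pi> i)))"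
      by (intro monomial_of_degree_mult monomial_of_degree_prod)
        (auto simp: sign_def monomial_of_degree_1 intro: monomial_of_degree_uminus)
    then show "monomial_of_degree (\<Sum>i<d. m + int d - (int i + 1) * int p - int i)
        (signof \<pi> * (\<Prod>i=0..<d. Mmat p d G $$ (i, \<pi> i)))"
      unfolding degree .
  qed
qed

lemma double_sum_lessThan_int: "2 * (\<Sum>i<n. int i) = int n * (int n - 1)"
  by (induction n) (auto simp: algebra_simps)

lemma monomial_of_degree_vandermonde:
  assumes "\<And>i. monomial_of_degree 1 (a i)"
  shows "monomial_of_degree (\<Sum>i<r. int i) (vandermonde r a)"
proof -
  have "monomial_of_degree (\<Sum>i<r. \<Sum>j\<in>{i<..<r}. 1) (vandermonde r a)"
    unfolding vandermonde_def by (intro monomial_of_degree_prod monomial_of_degree_diff assms)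
  moreover have "(\<Sum>i<r. \<Sum>j\<in>{i<..<r}. 1) = (\<Sum>i<r. int (r - Suc i))"
    by simp
  moreover have "\<dots> = (\<Sum>i<r. int i)"
    by (rule sum.nat_diff_reindex)
  ultimately show ?thesis by simp
qed

lemma double_sum_Mmat_degrees:
  "2 * (\<Sum>i<d. m + int d - (int i + 1) * int p - int i)
    = 2 * int d * m - (int p - 1) * int d * (int d + 1)"
proof -
  have "(\<Sum>i<d. m + int d - (int i + 1) * int p - int i)
      = (\<Sum>i<d. (m + int d - int p) - (int p + 1) * int i)"
    by (simp add: algebra_simps)
  also have "\<dots> = int d * (m + int d - int p) - (int p + 1) * (\<Sum>i<d. int i)"
    by (simp add: sum_subtractf sum_distrib_left)
  finally have "2 * (\<Sum>i<d. m + int d - (int i + 1) * int p - int i)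
      = 2 * int d * (m + int d - int p) - (int p + 1) * (2 * (\<Sum>i<d. int i))"
    by (simp add: algebra_simps)
  also have "\<dots> = 2 * int d * (m + int d - int p) - (int p + 1) * (int d * (int d - 1))"
    by (simp only: double_sum_lessThan_int)
  finally show ?thesis
    by (simp add: algebra_simps)
qed

lemma comm_ring_hom_const_poly: "comm_ring_hom (\<lambda>c. [:c:])"
  by unfold_locales (auto simp: one_pCons)

lemma inj_on_monom_minus_1: "inj_on (\<lambda>i. monom (1::'a::comm_ring_1) i - 1) A"
  by (auto simp: inj_on_def monom_eq_iff')

locale Mmat_det_identity =
  fixes p d r e g :: nat and \<epsilon> :: "'a::idom"
  assumes two_le_r: "2 \<le> r" and d_pos: "0 < d" and d_le_p: "d \<le> p" and eps_nonzero: "\<epsilon> \<noteq> 0"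
    and det_identity: "det (Mmat p d (fpoly r ^ e)) = mConst \<epsilon> * delta r ^ g"
begin

lemma det_Mmat_specialize:
  assumes "comm_ring_hom hc"
  shows "det (Mmat p d (poly_of_roots r a ^ e)) = hc \<epsilon> * vandermonde r a ^ g"
proof -
  interpret ev: comm_ring_hom "eval_mpoly hc a" using assms by (rule comm_ring_hom_eval_mpoly)
  interpret mp: map_poly_comm_ring_hom "eval_mpoly hc a" ..
  have "det (Mmat p d (poly_of_roots r a ^ e)) = det (Mmat p d (map_poly (eval_mpoly hc a) (fpoly r ^ e)))"
    by (simp add: map_poly_eval_mpoly_fpoly[OF assms] mp.hom_power)
  also have "\<dots> = eval_mpoly hc a (mConst \<epsilon> * delta r ^ g)"
    by (simp add: det_Mmat_map_poly[OF ev.comm_ring_hom_axioms] det_identity)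
  also have "\<dots> = hc \<epsilon> * vandermonde r a ^ g"
    by (simp add: eval_mpoly_mConst[OF assms] eval_mpoly_delta[OF assms] ev.hom_mult ev.hom_power)
  finally show ?thesis .
qed

lemma det_Mmat_specialize_nonzero:
  fixes hc :: "'a \<Rightarrow> 'b::idom" and a :: "nat \<Rightarrow> 'b"
  assumes "comm_ring_hom hc" "hc \<epsilon> \<noteq> 0" "inj_on a {..<r}"
  shows "det (Mmat p d (poly_of_roots r a ^ e)) \<noteq> 0"
  by (simp add: det_Mmat_specialize[OF assms(1)] vandermonde_nonzero[OF assms(3)] assms(2))

lemma d_mult_p_minus_1_le: "d * (p - 1) \<le> r * e"
proof (rule ccontr)
  assume "\<not> d * (p - 1) \<le> r * e"
  define b :: "nat \<Rightarrow> 'a poly" where "b i = monom 1 i - 1" for i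
  have "degree (poly_of_roots r b ^ e) < d * (p - 1)"
    using \<open>\<not> d * (p - 1) \<le> r * e\<close> degree_poly_of_roots_power_le le_less_trans not_le by blast
  then have "det (Mmat p d (poly_of_roots r b ^ e)) = 0"
    using d_pos by (rule det_Mmat_eq_0_if_degree_less)
  moreover have "det (Mmat p d (poly_of_roots r b ^ e)) \<noteq> 0"
    unfolding b_def using eps_nonzero
    by (intro det_Mmat_specialize_nonzero[OF comm_ring_hom_const_poly _ inj_on_monom_minus_1]) simp
  ultimately show False by simp
qed

lemma e_less_p: "e < p"
proof (rule ccontr)
  assume "\<not> e < p"
  define b :: "nat \<Rightarrow> 'a poly" where "b i = monom 1 i - 1" for i
  have "[:0, 1:] dvd poly_of_roots r b"
    unfolding poly_of_roots_def using dvd_prodI[of "{..<r}" 0 "\<lambda>i. [:- b i, 1:]"] two_le_r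
    by (simp add: b_def)
  then have "[:0, 1:] ^ p dvd poly_of_roots r b ^ e"
    using \<open>\<not> e < p\<close> by (meson dvd_power_same le_imp_power_dvd not_less dvd_trans)
  then have "monom 1 p dvd poly_of_roots r b ^ e"
    by (simp add: monom_altdef)
  then have "det (Mmat p d (poly_of_roots r b ^ e)) = 0"
    using d_le_p d_pos by (rule det_Mmat_eq_0_if_monom_dvd)
  moreover have "det (Mmat p d (poly_of_roots r b ^ e)) \<noteq> 0"
    unfolding b_def using eps_nonzero
    by (intro det_Mmat_specialize_nonzero[OF comm_ring_hom_const_poly _ inj_on_monom_minus_1]) simp
  ultimately show False by simp
qed

lemma even_g:
  assumes "(2::'a) \<noteq> 0"
  shows "even g"
proof (rule ccontr)
  assume "odd g"
  define b :: "nat \<Rightarrow> 'a poly" where "b i = monom 1 i - 1" for i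
  let ?rhs = "[:\<epsilon>:] * vandermonde r b ^ g"
  have "Transposition.transpose 0 1 permutes {..<r}"
    using two_le_r by (intro permutes_swap_id) auto
  have "?rhs = det (Mmat p d (poly_of_roots r b ^ e))"
    by (simp add: det_Mmat_specialize[OF comm_ring_hom_const_poly])
  also have "\<dots> = det (Mmat p d (poly_of_roots r (b \<circ> Transposition.transpose 0 1) ^ e))"
    using \<open>Transposition.transpose 0 1 permutes {..<r}\<close> by (simp add: poly_of_roots_permute)
  also have "\<dots> = [:\<epsilon>:] * vandermonde r (b \<circ> Transposition.transpose 0 1) ^ g"
    by (simp add: det_Mmat_specialize[OF comm_ring_hom_const_poly])
  also have "\<dots> = - ?rhs"
    unfolding vandermonde_transpose_0_1[OF two_le_r] using \<open>odd g\<close> by simp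
  finally have "2 * ?rhs = 0" by simp
  moreover have "vandermonde r b \<noteq> 0"
    unfolding b_def by (rule vandermonde_nonzero[OF inj_on_monom_minus_1])
  then have "?rhs \<noteq> 0"
    using eps_nonzero by simp
  moreover have "(2::'a poly) \<noteq> 0"
    using assms by (metis of_nat_numeral of_nat_poly pCons_eq_0_iff)
  ultimately show False by simp
qed

lemma degree_equation:
  "int g * (int r * (int r - 1)) = 2 * int d * int r * int e - (int p - 1) * int d * (int d + 1)"
proof -
  define a :: "nat \<Rightarrow> 'a poly poly" where "a i = monom (monom 1 i - 1) 1" for i
  have a: "monomial_of_degree 1 (a i)" for i
    using monomial_of_degree_monom[of 1] by (simp add: a_def)
  have homogeneous: "homogeneous_of_degree (int (r * e)) (poly_of_roots r a ^ e)"
    using homogeneous_of_degree_power[OF homogeneous_of_degree_poly_of_roots[OF a]]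
    by (simp add: mult.commute)
  have hom: "comm_ring_hom (\<lambda>c. [:[:c:]:])"
    by unfold_locales (auto simp: one_pCons)
  have lhs: "monomial_of_degree (\<Sum>i<d. int (r * e) + int d - (int i + 1) * int p - int i)
      ([:[:\<epsilon>:]:] * vandermonde r a ^ g)"
    using det_Mmat_homogeneous[OF homogeneous, of d p] unfolding det_Mmat_specialize[OF hom] .
  have rhs: "monomial_of_degree (0 + int g * (\<Sum>i<r. int i)) ([:[:\<epsilon>:]:] * vandermonde r a ^ g)"
    by (intro monomial_of_degree_mult monomial_of_degree_const monomial_of_degree_power
        monomial_of_degree_vandermonde a)
  have "inj_on a {..<r}"
    using inj_on_monom_minus_1 by (auto simp: inj_on_def a_def monom_eq_iff')
  then have "[:[:\<epsilon>:]:] * vandermonde r a ^ g \<noteq> 0"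
    using eps_nonzero vandermonde_nonzero[OF \<open>inj_on a {..<r}\<close>] by simp
  then have degrees: "(\<Sum>i<d. int (r * e) + int d - (int i + 1) * int p - int i)
      = int g * (\<Sum>i<r. int i)"
    using monomial_of_degree_unique[OF lhs rhs] by simp
  have "int g * (int r * (int r - 1)) = int g * (2 * (\<Sum>i<r. int i))"
    by (simp only: double_sum_lessThan_int)
  also have "\<dots> = 2 * (\<Sum>i<d. int (r * e) + int d - (int i + 1) * int p - int i)"
    unfolding degrees by simp
  also have "\<dots> = 2 * int d * int (r * e) - (int p - 1) * int d * (int d + 1)"
    by (rule double_sum_Mmat_degrees)
  finally show ?thesis
    by simp
qed

end

lemma gval_eq_of_nat:
  assumes "2 \<le> r"
    and "int g * (int r * (int r - 1)) = 2 * int d * int r * int e - (int p - 1) * int d * (int d + 1)"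
  shows "gval p r e d = of_nat g"
proof -
  have "(of_nat g :: rat) * (of_nat r * (of_nat r - 1))
      = 2 * of_nat d * of_nat r * of_nat e - (of_nat p - 1) * of_nat d * (of_nat d + 1)"
    using arg_cong[OF assms(2), of "of_int :: int \<Rightarrow> rat"] by simp
  moreover have "(of_nat r :: rat) * (of_nat r - 1) \<noteq> 0"
    using assms(1) by simp
  ultimately show ?thesis
    unfolding gval_def by (simp add: field_simps)
qed

lemma two_neq_zero_mod_ring:
  assumes "CARD('p::prime_card) \<noteq> 2"
  shows "(2 :: 'p mod_ring) \<noteq> 0"
proof
  assume "(2 :: 'p mod_ring) = 0"
  then have "CARD('p) dvd 2"
    using of_nat_0_mod_ring_dvd[of 2] by simp
  then have "CARD('p) \<le> 2"
    by (rule dvd_imp_le) simp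
  moreover have "2 \<le> CARD('p)"
    using prime_card prime_ge_2_nat by blast
  ultimately show False
    using assms by simp
qed

lemma inU_intro:
  assumes "2 \<le> r" "1 \<le> e" "1 \<le> d" "d \<le> p" "d * (p - 1) \<le> r * e" "e < p"
    and "0 < g" "gval p r e d = of_nat g" "p \<noteq> 2 \<Longrightarrow> even g"
  shows "inU p r e d"
proof -
  have "int (d * (p - 1)) \<le> int (r * e)"
    using assms(5) by (simp only: of_nat_le_iff)
  then have "int d * (int p - 1) \<le> int r * int e"
    using assms(3,4) by (simp add: of_nat_diff)
  moreover have "int r * int e \<le> int r * (int p - 1)"
    using assms(6) by (intro mult_left_mono) auto
  moreover have "\<exists>k::int. gval p r e d = of_int (2 * k)" if odd_char: "p \<noteq> 2"
  proof -
    obtain k where "g = 2 * k"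
      using assms(9)[OF odd_char] ..
    then have "gval p r e d = of_int (2 * int k)"
      using assms(8) by simp
    then show ?thesis ..
  qed
  ultimately show ?thesis
    unfolding inU_def using assms by auto
qed

theorem lemma4:
  fixes r e d :: nat
  assumes "inA TYPE('p::prime_card) r e d"
  shows "inU CARD('p) r e d"
proof -
  from assms obtain \<epsilon> :: "'p mod_ring" and g :: nat where
    bounds: "2 \<le> r" "1 \<le> e" "1 \<le> d" "d \<le> CARD('p)" and "\<epsilon> \<noteq> 0" "0 < g"
    and "det (Mmat CARD('p) d ((fpoly r :: 'p mod_ring mpoly poly) ^ e)) = mConst \<epsilon> * delta r ^ g"
    unfolding inA_def by blast
  then interpret Mmat_det_identity "CARD('p)" d r e g \<epsilon>
    by unfold_locales auto
  show ?thesis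
  proof (rule inU_intro)
    show "gval CARD('p) r e d = of_nat g"
      using two_le_r degree_equation by (rule gval_eq_of_nat)
    show "even g" if "CARD('p) \<noteq> 2"
      using two_neq_zero_mod_ring[OF that] by (rule even_g)
  qed (use bounds \<open>0 < g\<close> d_mult_p_minus_1_le e_less_p in auto)
qed

end
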